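(* Let $(\mathfrak{g},[-,-],(-,-))$ be a metric real Lie algebra and $(V,\langle-,-\rangle)$ a faithful real orthogonal representation of $\mathfrak{g}$, and let $T:V\times V\to\mathfrak{g}$ be defined by $(T(u,v),x)=\langle x\cdot u,v\rangle$. Then the 3-bracket $[u,v,w]=T(u,v)\cdot w$ on $V$ defines a real metric 3-Leibniz algebra with the symmetric inner product $\langle-,-\rangle$.
   Context: All vector spaces are finite-dimensional and real. A metric real Lie algebra has a nondegenerate symmetric ad-invariant bilinear form $(-,-)$ (any signature). A real orthogonal representation is a Lie algebra homomorphism $\mathfrak{g}\to\mathfrak{so}(V)$ with respect to a nondegenerate symmetric form $\langle-,-\rangle$; faithful means injective. A real metric 3-Leibniz algebra is a vector space with nondegenerate symmetric $\langle-,-\rangle$ and trilinear $[-,-,-]$ satisfying: fundamental identity $[x,y,[z,s,t]]=[[x,y,z],s,t]+[z,[x,y,s],t]+[z,s,[x,y,t]]$; unitarity $\langle[x,y,z],s\rangle+\langle z,[x,y,s]\rangle=0$; symmetry $\langle[x,y,z],s\rangle=\langle[z,s,x],y\rangle$. *)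

theory Defs
  imports "HOL-Analysis.Analysis"
begin

definition fin_dim_space :: "'a::real_vector itself \<Rightarrow> bool" where
  "fin_dim_space _ \<longleftrightarrow> (\<exists>B::'a set. finite B \<and> span B = UNIV)"

definition nondeg_sym_form :: "('a::real_vector \<Rightarrow> 'a \<Rightarrow> real) \<Rightarrow> bool" where
  "nondeg_sym_form B \<longleftrightarrow> bilinear B \<and> (\<forall>x y. B x y = B y x)
     \<and> (\<forall>x. (\<forall>y. B x y = 0) \<longrightarrow> x = 0)"

definition lie_algebra :: "('g::real_vector \<Rightarrow> 'g \<Rightarrow> 'g) \<Rightarrow> bool" where
  "lie_algebra br \<longleftrightarrow> bilinear br \<and> (\<forall>x. br x x = 0)
     \<and> (\<forall>x y z. br x (br y z) + br y (br z x) + br z (br x y) = 0)"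

definition metric_lie_algebra :: "('g::real_vector \<Rightarrow> 'g \<Rightarrow> 'g) \<Rightarrow> ('g \<Rightarrow> 'g \<Rightarrow> real) \<Rightarrow> bool" where
  "metric_lie_algebra br B \<longleftrightarrow> lie_algebra br \<and> nondeg_sym_form B
     \<and> (\<forall>x y z. B (br x y) z + B y (br x z) = 0)"

definition orthogonal_rep :: "('g::real_vector \<Rightarrow> 'g \<Rightarrow> 'g) \<Rightarrow> ('g \<Rightarrow> 'v::real_vector \<Rightarrow> 'v)
     \<Rightarrow> ('v \<Rightarrow> 'v \<Rightarrow> real) \<Rightarrow> bool" where
  "orthogonal_rep br rho Bv \<longleftrightarrow> nondeg_sym_form Bv \<and> bilinear rho
     \<and> (\<forall>x u w. Bv (rho x u) w + Bv u (rho x w) = 0)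
     \<and> (\<forall>x y u. rho (br x y) u = rho x (rho y u) - rho y (rho x u))"

definition faithful_rep :: "('g::real_vector \<Rightarrow> 'v::real_vector \<Rightarrow> 'v) \<Rightarrow> bool" where
  "faithful_rep rho \<longleftrightarrow> inj rho"

definition trilinear :: "('v::real_vector \<Rightarrow> 'v \<Rightarrow> 'v \<Rightarrow> 'v) \<Rightarrow> bool" where
  "trilinear t \<longleftrightarrow> (\<forall>y z. linear (\<lambda>x. t x y z)) \<and> (\<forall>x z. linear (\<lambda>y. t x y z))
     \<and> (\<forall>x y. linear (\<lambda>z. t x y z))"

definition metric_3_leibniz :: "('v::real_vector \<Rightarrow> 'v \<Rightarrow> 'v \<Rightarrow> 'v) \<Rightarrow> ('v \<Rightarrow> 'v \<Rightarrow> real) \<Rightarrow> bool" where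
  "metric_3_leibniz t B \<longleftrightarrow> nondeg_sym_form B \<and> trilinear t
     \<and> (\<forall>x y z s u. t x y (t z s u) = t (t x y z) s u + t z (t x y s) u + t z s (t x y u))
     \<and> (\<forall>x y z s. B (t x y z) s + B z (t x y s) = 0)
     \<and> (\<forall>x y z s. B (t x y z) s = B (t z s x) y)"

end

theory Submission
  imports Defs
begin

text \<open>The map T is the transpose of the action with respect to the two forms, so it is bilinear
  and, by ad-invariance of the form on \<open>\<g>\<close> and orthogonality of the action, \<open>\<g>\<close>-equivariant:
  \<open>[X, T(z,s)] = T(X\<cdot>z, s) + T(z, X\<cdot>s)\<close>. Acting with this identity on V and using that the
  representation is a homomorphism gives the fundamental identity; unitarity is orthogonality of
  the action, and symmetry is symmetry of the form on \<open>\<g>\<close>.\<close>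

lemma nondeg_sym_form_eqI:
  assumes "nondeg_sym_form B" and "\<And>w. B a w = B b w"
  shows "a = b"
proof -
  have "bilinear B" and nondeg: "\<And>x. (\<forall>y. B x y = 0) \<Longrightarrow> x = 0"
    using assms(1) unfolding nondeg_sym_form_def by blast+
  then have "\<forall>w. B (a - b) w = 0"
    using assms(2) by (simp add: bilinear_lsub)
  then show ?thesis using nondeg by force
qed

lemma bilinear_transpose_of_action:
  assumes "nondeg_sym_form Bg" and "bilinear rho" and "bilinear Bv"
    and T: "\<And>u v x. Bg (T u v) x = Bv (rho x u) v"
  shows "bilinear T"
proof -
  have Bg: "bilinear Bg" using assms(1) unfolding nondeg_sym_form_def by blast
  note eqI = nondeg_sym_form_eqI[OF assms(1)]
  have "T (u + u') v = T u v + T u' v" "T (c *\<^sub>R u) v = c *\<^sub>R T u v"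
    "T u (v + v') = T u v + T u v'" "T u (c *\<^sub>R v) = c *\<^sub>R T u v" for c u u' v v'
    by (rule eqI; simp add: T bilinear_ladd[OF Bg] bilinear_lmul[OF Bg]
        bilinear_radd[OF assms(2)] bilinear_rmul[OF assms(2)] bilinear_ladd[OF assms(3)]
        bilinear_lmul[OF assms(3)] bilinear_radd[OF assms(3)] bilinear_rmul[OF assms(3)])+
  then show ?thesis unfolding bilinear_def by (auto intro!: linearI)
qed

lemma trilinear_action_of_bilinear:
  assumes "bilinear T" and "bilinear rho"
  shows "trilinear (\<lambda>u v w. rho (T u v) w)"
  unfolding trilinear_def
  by (auto intro!: linearI simp: bilinear_ladd[OF assms(1)] bilinear_lmul[OF assms(1)]
      bilinear_radd[OF assms(1)] bilinear_rmul[OF assms(1)] bilinear_ladd[OF assms(2)]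
      bilinear_lmul[OF assms(2)] bilinear_radd[OF assms(2)] bilinear_rmul[OF assms(2)])

lemma transpose_of_action_equivariant:
  assumes "metric_lie_algebra br Bg" and "orthogonal_rep br rho Bv"
    and T: "\<And>u v x. Bg (T u v) x = Bv (rho x u) v"
  shows "br X (T z s) = T (rho X z) s + T z (rho X s)"
proof -
  have "nondeg_sym_form Bg" and Bg: "bilinear Bg"
    and inv: "\<And>x y z. Bg (br x y) z + Bg y (br x z) = 0"
    using assms(1) unfolding metric_lie_algebra_def nondeg_sym_form_def by blast+
  have Bv: "bilinear Bv"
    and orth: "\<And>x u w. Bv (rho x u) w + Bv u (rho x w) = 0"
    and hom: "\<And>x y u. rho (br x y) u = rho x (rho y u) - rho y (rho x u)"
    using assms(2) unfolding orthogonal_rep_def nondeg_sym_form_def by blast+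
  show ?thesis
  proof (rule nondeg_sym_form_eqI[OF \<open>nondeg_sym_form Bg\<close>])
    fix w
    have "Bg (br X (T z s)) w = - Bg (T z s) (br X w)"
      using inv[of X "T z s" w] by simp
    also have "\<dots> = - Bv (rho X (rho w z)) s + Bv (rho w (rho X z)) s"
      by (simp add: T hom bilinear_lsub[OF Bv])
    also have "\<dots> = Bv (rho w z) (rho X s) + Bv (rho w (rho X z)) s"
      using orth[of X "rho w z" s] by simp
    also have "\<dots> = Bg (T (rho X z) s + T z (rho X s)) w"
      by (simp add: T bilinear_ladd[OF Bg])
    finally show "Bg (br X (T z s)) w = Bg (T (rho X z) s + T z (rho X s)) w" .
  qed
qed

lemma fundamental_identity_of_equivariant:
  assumes "bilinear rho"
    and hom: "\<And>x y u. rho (br x y) u = rho x (rho y u) - rho y (rho x u)"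
    and equiv: "\<And>X z s. br X (T z s) = T (rho X z) s + T z (rho X s)"
  shows "rho (T x y) (rho (T z s) u)
    = rho (T (rho (T x y) z) s) u + rho (T z (rho (T x y) s)) u + rho (T z s) (rho (T x y) u)"
proof -
  have "rho (br (T x y) (T z s)) u = rho (T (rho (T x y) z) s) u + rho (T z (rho (T x y) s)) u"
    by (simp add: equiv bilinear_ladd[OF assms(1)])
  then show ?thesis by (simp add: hom algebra_simps)
qed

theorem mainTheorem15:
  fixes br :: "'g::real_vector \<Rightarrow> 'g \<Rightarrow> 'g"
    and Bg :: "'g \<Rightarrow> 'g \<Rightarrow> real"
    and rho :: "'g \<Rightarrow> 'v::real_vector \<Rightarrow> 'v"
    and Bv :: "'v \<Rightarrow> 'v \<Rightarrow> real"
    and T :: "'v \<Rightarrow> 'v \<Rightarrow> 'g"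
  assumes "fin_dim_space TYPE('g)"
    and "fin_dim_space TYPE('v)"
    and "metric_lie_algebra br Bg"
    and "orthogonal_rep br rho Bv"
    and "faithful_rep rho"
    and "\<forall>u v x. Bg (T u v) x = Bv (rho x u) v"
  shows "metric_3_leibniz (\<lambda>u v w. rho (T u v) w) Bv"
proof -
  have T: "\<And>u v x. Bg (T u v) x = Bv (rho x u) v" using assms(6) by blast
  have Bg: "nondeg_sym_form Bg" using assms(3) unfolding metric_lie_algebra_def by blast
  then have Bg_sym: "\<And>x y. Bg x y = Bg y x" unfolding nondeg_sym_form_def by blast
  have Bv: "nondeg_sym_form Bv" and "bilinear rho"
    and orth: "\<And>x u w. Bv (rho x u) w + Bv u (rho x w) = 0"
    and hom: "\<And>x y u. rho (br x y) u = rho x (rho y u) - rho y (rho x u)"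
    using assms(4) unfolding orthogonal_rep_def by blast+
  then have "bilinear Bv" unfolding nondeg_sym_form_def by blast
  have "bilinear T"
    using bilinear_transpose_of_action[of Bg rho Bv T, OF Bg \<open>bilinear rho\<close> \<open>bilinear Bv\<close> T] .
  then have trilinear: "trilinear (\<lambda>u v w. rho (T u v) w)"
    using trilinear_action_of_bilinear \<open>bilinear rho\<close> by blast
  have equivariant: "br X (T z s) = T (rho X z) s + T z (rho X s)" for X z s
    using transpose_of_action_equivariant[of br Bg rho Bv T, OF assms(3,4) T] .
  note fundamental = fundamental_identity_of_equivariant[of rho br T, OF \<open>bilinear rho\<close> hom equivariant]
  have symmetric: "Bv (rho (T x y) z) s = Bv (rho (T z s) x) y" for x y z s
    by (simp add: T[symmetric] Bg_sym)
  show ?thesis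
    unfolding metric_3_leibniz_def using Bv trilinear fundamental orth symmetric by blast
qed

end
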